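(* The set $N_0:=S^2\setminus(A\cup -A)$ contains no three mutually orthogonal unit vectors.
   Context: For $t\in[-\tfrac12,0)$ define points of $S^2\subset\mathbb{R}^3$: $\mathbf r_1(t)=\big(\tfrac{1}{\sqrt2},\,t,\,\sqrt{\tfrac12-t^2}\big)$, $\mathbf r_2(t)=\Big(-\tfrac{\frac12+t}{1+t},\,\tfrac1{\sqrt2},\,\tfrac1{\sqrt2}\tfrac{\sqrt{\frac12-t^2}}{1+t}\Big)$, $\mathbf r_3(t)=\mathbf r_1(t)\times\mathbf r_2(t)=\Big(-\tfrac1{\sqrt2}\tfrac{\sqrt{\frac12-t^2}}{1+t},\,-\sqrt{\tfrac12-t^2},\,\tfrac{\frac12+t+t^2}{1+t}\Big)$. Let $R_{\pi/2}$ be the rotation $(x,y,z)\mapsto(-y,x,z)$ (by $\pi/2$ about the $z$-axis). Define $\mathbf r_0:[0,\tfrac14)\to S^2$ by $\mathbf r_0(t)=\mathbf r_1(6t-\tfrac12)$ for $t\in[0,\tfrac1{12})$, $\mathbf r_0(t)=R_{\pi/2}^3\mathbf r_2(6t-1)$ for $t\in[\tfrac1{12},\tfrac16)$, $\mathbf r_0(t)=R_{\pi/2}^2\mathbf r_3(6t-\tfrac32)$ for $t\in[\tfrac16,\tfrac14)$. Define $\mathbf R:[0,1)\to S^2$ by $\mathbf R(t)=R_{\pi/2}^k\,\mathbf r_0(t-\tfrac k4)$ for $t\in[\tfrac k4,\tfrac{k+1}4)$, $k=0,1,2,3$, and extend $\mathbf R$ to $\mathbb R$ periodically with period $1$: $\mathbf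 R(t):=\mathbf R(t-\lfloor t\rfloor)$. The image $\Gamma=\mathbf R(\mathbb R)$ is a closed curve on $S^2$; let $A\subseteq S^2$ be the closed region bounded by $\Gamma$ containing the north pole, i.e. $A=\Gamma\cup C$, where $C$ is the connected component of $S^2\setminus\Gamma$ containing $(0,0,1)$. Also $-A:=\{-n:n\in A\}$. *)

theory Defs
  imports "HOL-Analysis.Analysis"
begin

definition r1 :: "real \<Rightarrow> real^3" where
  "r1 t = vector [1 / sqrt 2, t, sqrt (1/2 - t^2)]"

definition r2 :: "real \<Rightarrow> real^3" where
  "r2 t = vector [- ((1/2 + t) / (1 + t)), 1 / sqrt 2,
                  (1 / sqrt 2) * (sqrt (1/2 - t^2) / (1 + t))]"

definition r3 :: "real \<Rightarrow> real^3" where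
  "r3 t = cross3 (r1 t) (r2 t)"

definition rotz :: "real^3 \<Rightarrow> real^3" where
  "rotz v = vector [- (v$2), v$1, v$3]"

definition r0 :: "real \<Rightarrow> real^3" where
  "r0 t = (if t < 1/12 then r1 (6*t - 1/2)
           else if t < 1/6 then (rotz ^^ 3) (r2 (6*t - 1))
           else (rotz ^^ 2) (r3 (6*t - 3/2)))"

definition Rcurve :: "real \<Rightarrow> real^3" where
  "Rcurve t = (let s = t - of_int \<lfloor>t\<rfloor>; k = nat \<lfloor>4 * s\<rfloor>
               in (rotz ^^ k) (r0 (s - real k / 4)))"

definition Gamma :: "(real^3) set" where
  "Gamma = range Rcurve"

definition north :: "real^3" where
  "north = vector [0, 0, 1]"

definition Aregion :: "(real^3) set" where
  "Aregion = Gamma \<union> connected_component_set (sphere 0 1 - Gamma) north"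

definition N0 :: "(real^3) set" where
  "N0 = sphere 0 1 - (Aregion \<union> uminus ` Aregion)"

end

(*
  Call a unit vector (x, y, z) polar if either one of x, y dominates the other (2y\<^sup>2 \<le> x\<^sup>2 or
  2x\<^sup>2 \<le> y\<^sup>2) and x\<^sup>2, y\<^sup>2 \<le> 1/2, or neither dominates and \<surd>2|xy| + |z| \<ge> 1.  Polar vectors lie in
  A \<union> -A: the strict version of this zone in the upper hemisphere misses the curve and is
  star-shaped around the north pole, since scaling the horizontal part by l \<in> [0,1) while staying on
  the sphere keeps a point in it.  So every vector of N\<^sub>0 has x\<^sup>2 > 1/2, or y\<^sup>2 > 1/2, or lies in the
  diagonal band (x\<^sup>2 < 2y\<^sup>2, y\<^sup>2 < 2x\<^sup>2 and \<surd>2|xy| + |z| < 1).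

  In an orthonormal frame u, v, w the squares of the first coordinates sum to 1, and so do those of
  the second coordinates; so at most one vector has x\<^sup>2 > 1/2 and at most one has y\<^sup>2 > 1/2.  Band
  vectors have x\<^sup>2, y\<^sup>2 > 1/4 and (x + y)\<^sup>2 > 1 or (x - y)\<^sup>2 > 1, while the squares of x \<plusminus> y over the frame
  sum to 2; hence two band vectors force the third one to be polar.  In the remaining configuration
  u\<^sub>1 > 0, v\<^sub>2 > 0 (after sign changes), u\<^sub>1\<^sup>2, v\<^sub>2\<^sup>2 > 1/2 and w = \<plusminus>u \<times> v = \<plusminus>(c\<^sub>1, c\<^sub>2, q) in the
  band, the identity
    (c\<^sub>1\<^sup>2 + c\<^sub>2\<^sup>2)((tu\<^sub>1 + v\<^sub>2)\<^sup>2 + (tv\<^sub>1 - u\<^sub>2)\<^sup>2) = (tq + 1)\<^sup>2c\<^sub>1\<^sup>2 + (t + q)\<^sup>2c\<^sub>2\<^sup>2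
  gives a contradiction: for t \<ge> 0 its left side exceeds (c\<^sub>1\<^sup>2 + c\<^sub>2\<^sup>2)(t + 1)\<^sup>2/2, while the band
  conditions make the quadratic on the right at most that for some t \<ge> 0.
*)
theory Submission
  imports Defs
begin

unbundle cross3_syntax

lemma inner_vec3: "(u::real^3) \<bullet> v = u$1 * v$1 + u$2 * v$2 + u$3 * v$3"
  by (simp add: inner_vec_def sum_3)

lemma norm_eq_1_vec3: "norm (p::real^3) = 1 \<longleftrightarrow> (p$1)\<^sup>2 + (p$2)\<^sup>2 + (p$3)\<^sup>2 = 1"
  by (simp add: norm_eq_1 inner_vec3 power2_eq_square)

definition orthonormal_frame :: "real^3 \<Rightarrow> real^3 \<Rightarrow> real^3 \<Rightarrow> bool" where
  "orthonormal_frame u v w \<longleftrightarrow>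
     norm u = 1 \<and> norm v = 1 \<and> norm w = 1 \<and> u \<bullet> v = 0 \<and> u \<bullet> w = 0 \<and> v \<bullet> w = 0"

lemma orthonormal_frame_permute:
  assumes "orthonormal_frame u v w"
  shows "orthonormal_frame u w v" "orthonormal_frame v u w" "orthonormal_frame v w u"
    "orthonormal_frame w u v" "orthonormal_frame w v u"
  using assms unfolding orthonormal_frame_def by (auto simp: inner_commute)

lemma orthonormal_frame_scaleR:
  assumes "orthonormal_frame u v w" "\<bar>s\<bar> = 1" "\<bar>t\<bar> = 1"
  shows "orthonormal_frame (s *\<^sub>R u) (t *\<^sub>R v) w"
  using assms unfolding orthonormal_frame_def by simp

lemma orthonormal_expansion_cross:
  fixes u v x :: "real^3"
  assumes "u \<bullet> u = 1" "v \<bullet> v = 1" "u \<bullet> v = 0"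
  shows "x = (x \<bullet> u) *\<^sub>R u + (x \<bullet> v) *\<^sub>R v + (x \<bullet> (u \<times> v)) *\<^sub>R (u \<times> v)"
  using assms unfolding vec_eq_iff forall_3
  by (simp add: inner_vec_def sum_3 cross_components) (intro conjI; algebra)

lemma orthonormal_frame_cross:
  assumes "orthonormal_frame u v w"
  shows "w = u \<times> v \<or> w = - (u \<times> v)"
proof -
  have uv: "u \<bullet> u = 1" "v \<bullet> v = 1" "u \<bullet> v = 0" and w: "w \<bullet> u = 0" "w \<bullet> v = 0"
    using assms by (simp_all add: orthonormal_frame_def norm_eq_1 inner_commute)
  define c where "c = w \<bullet> (u \<times> v)"
  have wc: "w = c *\<^sub>R (u \<times> v)"
    using orthonormal_expansion_cross[OF uv, of w] unfolding w c_def by simp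
  have "(norm (u \<times> v))\<^sup>2 = 1"
    using norm_cross_dot[of u v] uv by (simp add: norm_eq_1[symmetric])
  then have "norm (u \<times> v) = 1" using power2_eq_iff_nonneg[of "norm (u \<times> v)" 1] by simp
  moreover have "norm w = 1" using assms by (simp add: orthonormal_frame_def)
  ultimately have "\<bar>c\<bar> = 1" using wc by simp
  then show ?thesis using wc by (auto simp: abs_if split: if_splits)
qed

lemma orthonormal_frame_parseval:
  assumes "orthonormal_frame u v w"
  shows "x \<bullet> y = (u \<bullet> x) * (u \<bullet> y) + (v \<bullet> x) * (v \<bullet> y) + (w \<bullet> x) * (w \<bullet> y)"
proof -
  have uv: "u \<bullet> u = 1" "v \<bullet> v = 1" "u \<bullet> v = 0"
    using assms by (simp_all add: orthonormal_frame_def norm_eq_1)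
  have "x \<bullet> y = ((x \<bullet> u) *\<^sub>R u + (x \<bullet> v) *\<^sub>R v + (x \<bullet> (u \<times> v)) *\<^sub>R (u \<times> v)) \<bullet> y"
    using orthonormal_expansion_cross[OF uv, of x] by simp
  also have "\<dots> = (u \<bullet> x) * (u \<bullet> y) + (v \<bullet> x) * (v \<bullet> y) + ((u \<times> v) \<bullet> x) * ((u \<times> v) \<bullet> y)"
    by (simp add: inner_add_left inner_commute[of x])
  finally show ?thesis
    using orthonormal_frame_cross[OF assms] by auto
qed

lemma orthonormal_frame_columns:
  assumes "orthonormal_frame u v w"
  shows "(u$1)\<^sup>2 + (v$1)\<^sup>2 + (w$1)\<^sup>2 = 1" "(u$2)\<^sup>2 + (v$2)\<^sup>2 + (w$2)\<^sup>2 = 1"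
    "(u$1 + u$2)\<^sup>2 + (v$1 + v$2)\<^sup>2 + (w$1 + w$2)\<^sup>2 = 2"
    "(u$1 - u$2)\<^sup>2 + (v$1 - v$2)\<^sup>2 + (w$1 - w$2)\<^sup>2 = 2"
proof -
  have sq: "x \<bullet> x = (u \<bullet> x)\<^sup>2 + (v \<bullet> x)\<^sup>2 + (w \<bullet> x)\<^sup>2" for x
    using orthonormal_frame_parseval[OF assms, of x x] by (simp add: power2_eq_square)
  define e1 e2 :: "real^3" where "e1 = axis 1 1" and "e2 = axis 2 1"
  have e: "e1 \<bullet> e1 = 1" "e2 \<bullet> e2 = 1" "e1 \<bullet> e2 = 0" "e2 \<bullet> e1 = 0"
    unfolding e1_def e2_def by (simp_all add: inner_axis_axis)
  have c: "p \<bullet> e1 = p$1" "p \<bullet> e2 = p$2" for p :: "real^3"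
    unfolding e1_def e2_def by (simp_all add: inner_axis)
  show "(u$1)\<^sup>2 + (v$1)\<^sup>2 + (w$1)\<^sup>2 = 1" "(u$2)\<^sup>2 + (v$2)\<^sup>2 + (w$2)\<^sup>2 = 1"
    "(u$1 + u$2)\<^sup>2 + (v$1 + v$2)\<^sup>2 + (w$1 + w$2)\<^sup>2 = 2"
    "(u$1 - u$2)\<^sup>2 + (v$1 - v$2)\<^sup>2 + (w$1 - w$2)\<^sup>2 = 2"
    using sq[of e1] sq[of e2] sq[of "e1 + e2"] sq[of "e1 - e2"]
    by (simp_all only: inner_add_left inner_add_right inner_diff_left inner_diff_right e
        c[of u] c[of v] c[of w])
qed

definition polar_zone :: "real \<Rightarrow> real \<Rightarrow> real \<Rightarrow> bool" where
  "polar_zone x y z \<longleftrightarrow>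
     ((2 * y\<^sup>2 \<le> x\<^sup>2 \<or> 2 * x\<^sup>2 \<le> y\<^sup>2) \<and> x\<^sup>2 \<le> 1/2 \<and> y\<^sup>2 \<le> 1/2) \<or>
     (x\<^sup>2 \<le> 2 * y\<^sup>2 \<and> y\<^sup>2 \<le> 2 * x\<^sup>2 \<and> 1 \<le> sqrt 2 * \<bar>x * y\<bar> + \<bar>z\<bar>)"

definition diagonal_band :: "real \<Rightarrow> real \<Rightarrow> real \<Rightarrow> bool" where
  "diagonal_band x y z \<longleftrightarrow> x\<^sup>2 < 2 * y\<^sup>2 \<and> y\<^sup>2 < 2 * x\<^sup>2 \<and> sqrt 2 * \<bar>x * y\<bar> + \<bar>z\<bar> < 1"

lemma not_polar_zone_cases:
  "\<not> polar_zone x y z \<Longrightarrow> x\<^sup>2 > 1/2 \<or> y\<^sup>2 > 1/2 \<or> diagonal_band x y z"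
  unfolding polar_zone_def diagonal_band_def by auto

lemma polar_zone_uminus: "polar_zone (-x) (-y) (-z) = polar_zone x y z"
  unfolding polar_zone_def by simp

lemma diagonal_band_uminus: "diagonal_band (-x) (-y) (-z) = diagonal_band x y z"
  unfolding diagonal_band_def by (simp add: abs_mult)

lemma diagonal_band_abs_z_less:
  assumes n: "x\<^sup>2 + y\<^sup>2 + z\<^sup>2 = 1" and K: "diagonal_band x y z"
  shows "\<bar>z\<bar> < 1/2"
proof -
  from K have b: "x\<^sup>2 < 2 * y\<^sup>2" "y\<^sup>2 < 2 * x\<^sup>2" and c: "sqrt 2 * \<bar>x * y\<bar> < 1 - \<bar>z\<bar>"
    unfolding diagonal_band_def by auto
  have "0 \<le> sqrt 2 * \<bar>x * y\<bar>" by simp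
  then have z1: "0 < 1 - \<bar>z\<bar>" using c by linarith
  have "9 * (x * y)\<^sup>2 - 2 * (x\<^sup>2 + y\<^sup>2)\<^sup>2 = (2 * y\<^sup>2 - x\<^sup>2) * (2 * x\<^sup>2 - y\<^sup>2)"
    by algebra
  also have "\<dots> > 0" using b by simp
  finally have "2 * (x\<^sup>2 + y\<^sup>2)\<^sup>2 < 9 * (x * y)\<^sup>2" by simp
  moreover have "x\<^sup>2 + y\<^sup>2 = 1 - z\<^sup>2" using n by simp
  ultimately have "(1 - z\<^sup>2)\<^sup>2 < 9/4 * (sqrt 2 * \<bar>x * y\<bar>)\<^sup>2"
    by (simp add: power_mult_distrib)
  also have "\<dots> < 9/4 * (1 - \<bar>z\<bar>)\<^sup>2"
    using c by (simp add: power_strict_mono)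
  finally have "(2 * (1 - z\<^sup>2))\<^sup>2 < (3 * (1 - \<bar>z\<bar>))\<^sup>2"
    by (simp only: power_mult_distrib) simp
  then have "2 * (1 - z\<^sup>2) < 3 * (1 - \<bar>z\<bar>)"
    by (rule power2_less_imp_less) (use z1 in simp)
  then have "(1 - \<bar>z\<bar>) * (2 + 2 * \<bar>z\<bar>) < (1 - \<bar>z\<bar>) * 3"
    by (simp add: algebra_simps power2_eq_square)
  then have "2 + 2 * \<bar>z\<bar> < 3" using z1 by (simp only: mult_less_cancel_left_pos)
  then show ?thesis by simp
qed

lemma diagonal_band_bounds:
  assumes n: "x\<^sup>2 + y\<^sup>2 + z\<^sup>2 = 1" and K: "diagonal_band x y z"
  shows "x\<^sup>2 > 1/4" "y\<^sup>2 > 1/4" "(x + y)\<^sup>2 > 1 \<or> (x - y)\<^sup>2 > 1"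
proof -
  have "\<bar>z\<bar>\<^sup>2 < (1/2)\<^sup>2"
    using diagonal_band_abs_z_less[OF n K] by (intro power_strict_mono) auto
  then have z2: "z\<^sup>2 < 1/4" by (simp add: power2_eq_square)
  from K have b: "x\<^sup>2 < 2 * y\<^sup>2" "y\<^sup>2 < 2 * x\<^sup>2" unfolding diagonal_band_def by auto
  show x: "x\<^sup>2 > 1/4" and y: "y\<^sup>2 > 1/4" using n z2 b by linarith+
  have "\<bar>x\<bar> > 1/2" "\<bar>y\<bar> > 1/2"
    using x y power2_less_imp_less[of "1/2" "\<bar>x\<bar>"] power2_less_imp_less[of "1/2" "\<bar>y\<bar>"]
    by (simp_all add: power2_eq_square)
  then have "\<bar>x\<bar> * \<bar>y\<bar> > 1/2 * (1/2)" by (intro mult_strict_mono) auto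
  then have "2 * \<bar>x * y\<bar> > z\<^sup>2" using z2 by (simp add: abs_mult)
  moreover have "(x + y)\<^sup>2 = x\<^sup>2 + y\<^sup>2 + 2 * \<bar>x * y\<bar> \<or> (x - y)\<^sup>2 = x\<^sup>2 + y\<^sup>2 + 2 * \<bar>x * y\<bar>"
    by (cases "x * y \<ge> 0") (simp_all add: power2_sum power2_diff)
  ultimately show "(x + y)\<^sup>2 > 1 \<or> (x - y)\<^sup>2 > 1" using n by linarith
qed

lemma quadratic_nonpos_at_nonneg:
  fixes A B C :: real
  assumes "B < 0" "B\<^sup>2 - 4 * A * C > 0"
  shows "\<exists>t\<ge>0. A * t\<^sup>2 + B * t + C \<le> 0"
proof (cases "C \<le> 0")
  case True
  then show ?thesis by (intro exI[of _ 0]) auto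
next
  case C: False
  show ?thesis
  proof (cases "A \<le> 0")
    case True
    define t where "t = C / (-B)"
    have "t \<ge> 0" unfolding t_def using C assms(1) divide_pos_neg[of C B] by simp
    moreover have "B * t + C = 0" unfolding t_def using assms(1) by (simp add: field_simps)
    moreover have "A * t\<^sup>2 \<le> 0" using True by (simp add: mult_nonpos_nonneg)
    ultimately show ?thesis by (intro exI[of _ t]) auto
  next
    case A: False
    define t where "t = -B / (2 * A)"
    have "t \<ge> 0" unfolding t_def using A assms(1) divide_neg_pos[of B "2 * A"] by simp
    moreover have "4 * A * (A * t\<^sup>2 + B * t + C) = 4 * A * C - B\<^sup>2"
      unfolding t_def using A by (simp add: field_simps power2_eq_square)
    then have "4 * A * (A * t\<^sup>2 + B * t + C) < 0" using assms(2) by simp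
    then have "A * t\<^sup>2 + B * t + C < 0" using A by (simp add: mult_less_0_iff)
    ultimately show ?thesis by (intro exI[of _ t]) auto
  qed
qed

lemma diagonal_band_quadratic_witness:
  assumes n: "c1\<^sup>2 + c2\<^sup>2 + q\<^sup>2 = 1" and K: "diagonal_band c1 c2 q" and q: "0 < q"
  shows "\<exists>t\<ge>0. (t * q + 1)\<^sup>2 * c1\<^sup>2 + (t + q)\<^sup>2 * c2\<^sup>2 \<le> (c1\<^sup>2 + c2\<^sup>2) * (t + 1)\<^sup>2 / 2"
proof -
  define r where "r = c1\<^sup>2 + c2\<^sup>2"
  have q1: "q < 1/2" using diagonal_band_abs_z_less[OF n K] by simp
  have "q * q < 1 * 1" using q q1 by (intro mult_strict_mono) auto
  then have r: "r > 0" using n unfolding r_def by (simp add: power2_eq_square)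
  have "sqrt 2 * \<bar>c1 * c2\<bar> < 1 - q" using K q unfolding diagonal_band_def by simp
  then have "(sqrt 2 * \<bar>c1 * c2\<bar>)\<^sup>2 < (1 - q)\<^sup>2" by (intro power_strict_mono) auto
  then have band: "2 * (c1 * c2)\<^sup>2 < (1 - q)\<^sup>2" by (simp add: power_mult_distrib)
  define A where "A = q\<^sup>2 * c1\<^sup>2 + c2\<^sup>2 - r / 2"
  define B where "B = r * (2 * q - 1)"
  define C where "C = c1\<^sup>2 + q\<^sup>2 * c2\<^sup>2 - r / 2"
  have "B < 0" unfolding B_def using r q1 by (simp add: mult_pos_neg)
  moreover have "B\<^sup>2 - 4 * A * C = r\<^sup>2 * (2 * (1 - q)\<^sup>2 - 4 * (c1 * c2)\<^sup>2)"
    unfolding A_def B_def C_def r_def using n by algebra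
  then have "B\<^sup>2 - 4 * A * C > 0" using r band by simp
  ultimately obtain t where "t \<ge> 0" "A * t\<^sup>2 + B * t + C \<le> 0"
    using quadratic_nonpos_at_nonneg by blast
  moreover have "A * t\<^sup>2 + B * t + C = (t * q + 1)\<^sup>2 * c1\<^sup>2 + (t + q)\<^sup>2 * c2\<^sup>2 - r * (t + 1)\<^sup>2 / 2"
    unfolding A_def B_def C_def r_def by (simp add: field_simps power2_eq_square)
  ultimately show ?thesis unfolding r_def by (intro exI[of _ t]) auto
qed

lemma cross_not_in_diagonal_band_pos:
  fixes a1 a2 a3 b1 b2 b3 :: real
  assumes na: "a1\<^sup>2 + a2\<^sup>2 + a3\<^sup>2 = 1" and nb: "b1\<^sup>2 + b2\<^sup>2 + b3\<^sup>2 = 1"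
    and ab: "a1 * b1 + a2 * b2 + a3 * b3 = 0"
    and a: "a1 > 0" "a1\<^sup>2 > 1/2" and b: "b2 > 0" "b2\<^sup>2 > 1/2"
  shows "\<not> diagonal_band (a2 * b3 - a3 * b2) (a3 * b1 - a1 * b3) (a1 * b2 - a2 * b1)"
proof
  define c1 c2 q where "c1 = a2 * b3 - a3 * b2" and "c2 = a3 * b1 - a1 * b3"
    and "q = a1 * b2 - a2 * b1"
  assume "diagonal_band (a2 * b3 - a3 * b2) (a3 * b1 - a1 * b3) (a1 * b2 - a2 * b1)"
  then have K: "diagonal_band c1 c2 q" unfolding c1_def c2_def q_def .
  have "a1\<^sup>2 * b2\<^sup>2 > 1/2 * (1/2)" using a b by (intro mult_strict_mono) auto
  then have "(a1 * b2)\<^sup>2 > (1/2)\<^sup>2" by (simp add: power_mult_distrib power_divide)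
  then have a1b2: "a1 * b2 > 1/2" by (rule power2_less_imp_less) (use a b in simp)
  have "a2\<^sup>2 < 1/2" "b1\<^sup>2 < 1/2" using na nb a(2) b(2) zero_le_power2[of a3] zero_le_power2[of b3]
    by linarith+
  then have "(a2 * b1)\<^sup>2 < (1/2)\<^sup>2"
    using mult_strict_mono'[of "a2\<^sup>2" "1/2" "b1\<^sup>2" "1/2"] by (simp add: power_mult_distrib power_divide)
  then have "\<bar>a2 * b1\<bar> < 1/2" using power2_less_imp_less[of "\<bar>a2 * b1\<bar>" "1/2"] by simp
  then have "q > 0" unfolding q_def using a1b2 by linarith
  moreover have "c1\<^sup>2 + c2\<^sup>2 + q\<^sup>2 = 1" using na nb ab unfolding c1_def c2_def q_def by algebra
  ultimately obtain t where t: "t \<ge> 0"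
    and quad: "(t * q + 1)\<^sup>2 * c1\<^sup>2 + (t + q)\<^sup>2 * c2\<^sup>2 \<le> (c1\<^sup>2 + c2\<^sup>2) * (t + 1)\<^sup>2 / 2"
    using diagonal_band_quadratic_witness K by blast
  have lagrange: "(c1\<^sup>2 + c2\<^sup>2) * ((t * a1 + b2)\<^sup>2 + (t * b1 - a2)\<^sup>2)
      = (t * q + 1)\<^sup>2 * c1\<^sup>2 + (t + q)\<^sup>2 * c2\<^sup>2"
    using na nb ab unfolding c1_def c2_def q_def by algebra
  have "t\<^sup>2 * (1/2) \<le> t\<^sup>2 * a1\<^sup>2" using a(2) by (intro mult_left_mono) auto
  moreover have "t * (1/2) \<le> t * (a1 * b2)" using a1b2 t by (intro mult_left_mono) auto
  ultimately have "(t * a1 + b2)\<^sup>2 > (t + 1)\<^sup>2 / 2"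
    using b(2) by (simp add: power2_eq_square algebra_simps)
  moreover have "c1\<^sup>2 + c2\<^sup>2 > 0"
    using K zero_le_power2[of c1] unfolding diagonal_band_def by linarith
  ultimately have "(c1\<^sup>2 + c2\<^sup>2) * (t + 1)\<^sup>2 / 2 < (c1\<^sup>2 + c2\<^sup>2) * (t * a1 + b2)\<^sup>2"
    by simp
  also have "\<dots> \<le> (c1\<^sup>2 + c2\<^sup>2) * ((t * a1 + b2)\<^sup>2 + (t * b1 - a2)\<^sup>2)"
    by (simp add: mult_left_mono)
  finally show False using lagrange quad by linarith
qed

lemma orthonormal_frame_not_diagonal_band:
  assumes frame: "orthonormal_frame u v w" and u: "(u$1)\<^sup>2 > 1/2" and v: "(v$2)\<^sup>2 > 1/2"
  shows "\<not> diagonal_band (w$1) (w$2) (w$3)"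
proof
  assume K: "diagonal_band (w$1) (w$2) (w$3)"
  define a b where "a = sgn (u$1) *\<^sub>R u" and "b = sgn (v$2) *\<^sub>R v"
  have "u$1 \<noteq> 0" "v$2 \<noteq> 0" using u v by auto
  then have frame': "orthonormal_frame a b w"
    unfolding a_def b_def by (intro orthonormal_frame_scaleR[OF frame]) (simp_all add: abs_sgn_eq)
  have a: "a$1 > 0" "(a$1)\<^sup>2 > 1/2" and b: "b$2 > 0" "(b$2)\<^sup>2 > 1/2"
    using u v \<open>u$1 \<noteq> 0\<close> \<open>v$2 \<noteq> 0\<close> unfolding a_def b_def
    by (simp_all add: power_mult_distrib sgn_if)
  from orthonormal_frame_cross[OF frame']
  have "diagonal_band ((a \<times> b)$1) ((a \<times> b)$2) ((a \<times> b)$3)"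
  proof
    assume "w = - (a \<times> b)"
    then show ?thesis
      using K diagonal_band_uminus[of "(a \<times> b)$1" "(a \<times> b)$2" "(a \<times> b)$3"] by simp
  qed (use K in simp)
  moreover have "(a \<times> b)$1 = a$2 * b$3 - a$3 * b$2" "(a \<times> b)$2 = a$3 * b$1 - a$1 * b$3"
    "(a \<times> b)$3 = a$1 * b$2 - a$2 * b$1"
    by (simp_all add: cross3_def)
  ultimately have band:
    "diagonal_band (a$2 * b$3 - a$3 * b$2) (a$3 * b$1 - a$1 * b$3) (a$1 * b$2 - a$2 * b$1)"
    by simp
  have "norm a = 1" "norm b = 1" "a \<bullet> b = 0"
    using frame' by (simp_all add: orthonormal_frame_def)
  then have "(a$1)\<^sup>2 + (a$2)\<^sup>2 + (a$3)\<^sup>2 = 1" "(b$1)\<^sup>2 + (b$2)\<^sup>2 + (b$3)\<^sup>2 = 1"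
    "a$1 * b$1 + a$2 * b$2 + a$3 * b$3 = 0"
    unfolding norm_eq_1_vec3 inner_vec3 .
  with a b band show False
    using cross_not_in_diagonal_band_pos[of "a$1" "a$2" "a$3" "b$1" "b$2" "b$3"] by blast
qed

lemma orthonormal_frame_two_diagonal_bands:
  assumes frame: "orthonormal_frame u v w"
    and Ku: "diagonal_band (u$1) (u$2) (u$3)" and Kv: "diagonal_band (v$1) (v$2) (v$3)"
  shows "polar_zone (w$1) (w$2) (w$3)"
proof (rule ccontr)
  assume w: "\<not> polar_zone (w$1) (w$2) (w$3)"
  have n: "(u$1)\<^sup>2 + (u$2)\<^sup>2 + (u$3)\<^sup>2 = 1" "(v$1)\<^sup>2 + (v$2)\<^sup>2 + (v$3)\<^sup>2 = 1"
    "(w$1)\<^sup>2 + (w$2)\<^sup>2 + (w$3)\<^sup>2 = 1"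
    using frame by (simp_all add: orthonormal_frame_def norm_eq_1_vec3)
  note col = orthonormal_frame_columns[OF frame]
  note bu = diagonal_band_bounds[OF n(1) Ku] and bv = diagonal_band_bounds[OF n(2) Kv]
  from not_polar_zone_cases[OF w] show False
  proof (elim disjE)
    assume "(w$1)\<^sup>2 > 1/2" then show False using bu(1) bv(1) col(1) by linarith
  next
    assume "(w$2)\<^sup>2 > 1/2" then show False using bu(2) bv(2) col(2) by linarith
  next
    assume "diagonal_band (w$1) (w$2) (w$3)"
    note bw = diagonal_band_bounds[OF n(3) this]
    show False using bu(3) bv(3) bw(3) col(3,4)
        zero_le_power2[of "u$1 + u$2"] zero_le_power2[of "v$1 + v$2"] zero_le_power2[of "w$1 + w$2"]
        zero_le_power2[of "u$1 - u$2"] zero_le_power2[of "v$1 - v$2"] zero_le_power2[of "w$1 - w$2"]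
      by linarith
  qed
qed

lemma orthonormal_frame_meets_polar_zone:
  assumes frame: "orthonormal_frame u v w"
  shows "polar_zone (u$1) (u$2) (u$3) \<or> polar_zone (v$1) (v$2) (v$3) \<or>
    polar_zone (w$1) (w$2) (w$3)"
proof (rule ccontr)
  assume "\<not> ?thesis"
  then have nu: "\<not> polar_zone (u$1) (u$2) (u$3)" and nv: "\<not> polar_zone (v$1) (v$2) (v$3)"
    and nw: "\<not> polar_zone (w$1) (w$2) (w$3)" by auto
  note frames = orthonormal_frame_permute[OF frame]
  note col = orthonormal_frame_columns[OF frame]
  have "(u$1)\<^sup>2 \<ge> 0" "(v$1)\<^sup>2 \<ge> 0" "(w$1)\<^sup>2 \<ge> 0" "(u$2)\<^sup>2 \<ge> 0" "(v$2)\<^sup>2 \<ge> 0"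
    "(w$2)\<^sup>2 \<ge> 0"
    by simp_all
  with col(1,2)
  have "\<not> ((u$1)\<^sup>2 > 1/2 \<and> (v$1)\<^sup>2 > 1/2)" "\<not> ((u$1)\<^sup>2 > 1/2 \<and> (w$1)\<^sup>2 > 1/2)"
    "\<not> ((v$1)\<^sup>2 > 1/2 \<and> (w$1)\<^sup>2 > 1/2)" "\<not> ((u$2)\<^sup>2 > 1/2 \<and> (v$2)\<^sup>2 > 1/2)"
    "\<not> ((u$2)\<^sup>2 > 1/2 \<and> (w$2)\<^sup>2 > 1/2)" "\<not> ((v$2)\<^sup>2 > 1/2 \<and> (w$2)\<^sup>2 > 1/2)"
    by linarith+
  moreover have "\<not> (diagonal_band (u$1) (u$2) (u$3) \<and> diagonal_band (v$1) (v$2) (v$3))"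
    using orthonormal_frame_two_diagonal_bands[OF frame] nw by blast
  moreover have "\<not> (diagonal_band (u$1) (u$2) (u$3) \<and> diagonal_band (w$1) (w$2) (w$3))"
    using orthonormal_frame_two_diagonal_bands[OF frames(1)] nv by blast
  moreover have "\<not> (diagonal_band (v$1) (v$2) (v$3) \<and> diagonal_band (w$1) (w$2) (w$3))"
    using orthonormal_frame_two_diagonal_bands[OF frames(3)] nu by blast
  moreover have
    "\<not> ((u$1)\<^sup>2 > 1/2 \<and> (v$2)\<^sup>2 > 1/2 \<and> diagonal_band (w$1) (w$2) (w$3))"
    "\<not> ((u$1)\<^sup>2 > 1/2 \<and> (w$2)\<^sup>2 > 1/2 \<and> diagonal_band (v$1) (v$2) (v$3))"
    "\<not> ((v$1)\<^sup>2 > 1/2 \<and> (u$2)\<^sup>2 > 1/2 \<and> diagonal_band (w$1) (w$2) (w$3))"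
    "\<not> ((v$1)\<^sup>2 > 1/2 \<and> (w$2)\<^sup>2 > 1/2 \<and> diagonal_band (u$1) (u$2) (u$3))"
    "\<not> ((w$1)\<^sup>2 > 1/2 \<and> (u$2)\<^sup>2 > 1/2 \<and> diagonal_band (v$1) (v$2) (v$3))"
    "\<not> ((w$1)\<^sup>2 > 1/2 \<and> (v$2)\<^sup>2 > 1/2 \<and> diagonal_band (u$1) (u$2) (u$3))"
    using orthonormal_frame_not_diagonal_band[OF frame]
      orthonormal_frame_not_diagonal_band[OF frames(1)] orthonormal_frame_not_diagonal_band[OF frames(2)]
      orthonormal_frame_not_diagonal_band[OF frames(3)] orthonormal_frame_not_diagonal_band[OF frames(4)]
      orthonormal_frame_not_diagonal_band[OF frames(5)]
    by simp_all
  ultimately show False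
    using not_polar_zone_cases[OF nu] not_polar_zone_cases[OF nv] not_polar_zone_cases[OF nw]
    by metis
qed

definition open_cap :: "real \<Rightarrow> real \<Rightarrow> real \<Rightarrow> bool" where
  "open_cap x y z \<longleftrightarrow> z > 0 \<and>
     (((2 * y\<^sup>2 \<le> x\<^sup>2 \<or> 2 * x\<^sup>2 \<le> y\<^sup>2) \<and> x\<^sup>2 < 1/2 \<and> y\<^sup>2 < 1/2) \<or>
      (x\<^sup>2 \<le> 2 * y\<^sup>2 \<and> y\<^sup>2 \<le> 2 * x\<^sup>2 \<and> 1 < sqrt 2 * \<bar>x * y\<bar> + z))"

lemma rotz_components [simp]: "rotz v $ 1 = - (v$2)" "rotz v $ 2 = v$1" "rotz v $ 3 = v$3"
  unfolding rotz_def by simp_all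

lemma open_cap_rotz_pow:
  "open_cap (((rotz ^^ k) v)$1) (((rotz ^^ k) v)$2) (((rotz ^^ k) v)$3) \<longleftrightarrow>
    open_cap (v$1) (v$2) (v$3)"
proof (induction k)
  case (Suc k)
  then show ?case unfolding open_cap_def by (auto simp: abs_mult mult.commute)
qed simp

lemma r1_not_open_cap:
  assumes "-1/2 \<le> t" "t < 0"
  shows "\<not> open_cap (r1 t $ 1) (r1 t $ 2) (r1 t $ 3)"
proof -
  have "sqrt (1/2 - t\<^sup>2) \<le> 1 - \<bar>t\<bar>"
  proof (rule real_le_lsqrt)
    show "0 \<le> 1 - \<bar>t\<bar>" using assms by simp
    have "(1 - \<bar>t\<bar>)\<^sup>2 - (1/2 - t\<^sup>2) = 2 * (\<bar>t\<bar> - 1/2)\<^sup>2"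
      by (simp add: power2_eq_square algebra_simps)
    then show "1/2 - t\<^sup>2 \<le> (1 - \<bar>t\<bar>)\<^sup>2" using zero_le_power2[of "\<bar>t\<bar> - 1/2"] by linarith
  qed
  moreover have "sqrt 2 * \<bar>1 / sqrt 2 * t\<bar> = \<bar>t\<bar>" by (simp add: abs_mult)
  moreover have "(1 / sqrt 2)\<^sup>2 = (1/2::real)" by (simp add: power_divide)
  ultimately show ?thesis unfolding open_cap_def r1_def by auto
qed

lemma r2_not_open_cap:
  assumes "-1/2 \<le> t" "t < 0"
  shows "\<not> open_cap (r2 t $ 1) (r2 t $ 2) (r2 t $ 3)"
proof -
  define x where "x = (1/2 + t) / (1 + t)"
  have "0 \<le> x" "x < 1/2" unfolding x_def using assms by (simp_all add: field_simps)
  then have "x\<^sup>2 < (1/2)\<^sup>2" by (intro power_strict_mono) auto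
  then have "2 * (-x)\<^sup>2 < 1/2" by (simp add: power2_eq_square)
  moreover have "(1 / sqrt 2)\<^sup>2 = (1/2::real)" by (simp add: power_divide)
  ultimately show ?thesis unfolding open_cap_def r2_def x_def[symmetric] by auto
qed

lemma r3_components:
  assumes "-1/2 \<le> t" "t < 0"
  defines "s \<equiv> sqrt (1/2 - t\<^sup>2)"
  shows "r3 t $ 1 = - (s / (sqrt 2 * (1 + t)))" "r3 t $ 2 = - s"
    "r3 t $ 3 = (1/2 + t + t\<^sup>2) / (1 + t)"
proof -
  have t: "1 + t \<noteq> 0" using assms by simp
  have h: "1 / sqrt 2 * (1 / sqrt 2) = (1/2::real)" by (simp flip: power2_eq_square add: power_divide)
  have c: "r3 t $ 1 = t * (1 / sqrt 2 * (s / (1 + t))) - s * (1 / sqrt 2)"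
    "r3 t $ 2 = s * (- ((1/2 + t) / (1 + t))) - 1 / sqrt 2 * (1 / sqrt 2 * (s / (1 + t)))"
    "r3 t $ 3 = 1 / sqrt 2 * (1 / sqrt 2) - t * (- ((1/2 + t) / (1 + t)))"
    unfolding r3_def r1_def r2_def cross3_def s_def by simp_all
  have "r3 t $ 1 = s / sqrt 2 * (t / (1 + t) - 1)"
    unfolding c(1) by (simp add: algebra_simps)
  also have "t / (1 + t) - 1 = - 1 / (1 + t)" using t by (simp add: field_simps)
  finally show "r3 t $ 1 = - (s / (sqrt 2 * (1 + t)))" by simp
  have "r3 t $ 2 = - (s * ((1/2 + t) / (1 + t) + 1/2 / (1 + t)))"
    unfolding c(2) mult.assoc[symmetric] h by (simp add: distrib_left)
  also have "(1/2 + t) / (1 + t) + 1/2 / (1 + t) = 1" using t by (simp add: field_simps)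
  finally show "r3 t $ 2 = - s" by simp
  show "r3 t $ 3 = (1/2 + t + t\<^sup>2) / (1 + t)"
    unfolding c(3) h using t by (simp add: field_simps power2_eq_square)
qed

lemma r3_not_open_cap:
  assumes t: "-1/2 \<le> t" "t < 0"
  shows "\<not> open_cap (r3 t $ 1) (r3 t $ 2) (r3 t $ 3)"
proof -
  define s where "s = sqrt (1/2 - t\<^sup>2)"
  have "\<bar>t\<bar>\<^sup>2 \<le> (1/2)\<^sup>2" using t by (intro power_mono) auto
  then have t2: "t\<^sup>2 < 1/2" by (simp add: power2_eq_square)
  have s2: "s\<^sup>2 = 1/2 - t\<^sup>2" and s: "s > 0" unfolding s_def using t2 by simp_all
  have pos: "1 + t > 0" using t by simp
  note r3 = r3_components[OF t, folded s_def]
  have x2: "(r3 t $ 1)\<^sup>2 = s\<^sup>2 / (2 * (1 + t)\<^sup>2)" and y2: "(r3 t $ 2)\<^sup>2 = s\<^sup>2"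
    unfolding r3 by (simp_all add: power_divide power_mult_distrib)
  \<comment> \<open>r3 runs along the boundary surface of the diagonal part of the cap\<close>
  have "r3 t $ 1 * r3 t $ 2 = s\<^sup>2 / (sqrt 2 * (1 + t))"
    unfolding r3 by (simp add: power2_eq_square)
  then have "sqrt 2 * \<bar>r3 t $ 1 * r3 t $ 2\<bar> = s\<^sup>2 / (1 + t)"
    using pos by simp
  then have diag: "sqrt 2 * \<bar>r3 t $ 1 * r3 t $ 2\<bar> + r3 t $ 3 = 1"
    unfolding r3 s2 using pos by (simp add: field_simps power2_eq_square)
  have not_x: "\<not> (2 * (r3 t $ 2)\<^sup>2 \<le> (r3 t $ 1)\<^sup>2 \<and> (r3 t $ 1)\<^sup>2 < 1/2)"
  proof
    assume h: "2 * (r3 t $ 2)\<^sup>2 \<le> (r3 t $ 1)\<^sup>2 \<and> (r3 t $ 1)\<^sup>2 < 1/2"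
    then have "4 * (1 + t)\<^sup>2 * s\<^sup>2 \<le> 1 * s\<^sup>2" unfolding x2 y2 using pos by (simp add: field_simps)
    then have "4 * (1 + t)\<^sup>2 \<le> 1" using s by simp
    then have "(2 * (1 + t))\<^sup>2 \<le> 1\<^sup>2" by (simp only: power_mult_distrib) simp
    then have "2 * (1 + t) \<le> 1" by (rule power2_le_imp_le) simp
    then have "t = -1/2" using t by simp
    then have "(r3 t $ 1)\<^sup>2 = 1/2" unfolding x2 s2 by (simp add: power2_eq_square)
    with h show False by simp
  qed
  have not_y: "\<not> 2 * (r3 t $ 1)\<^sup>2 \<le> (r3 t $ 2)\<^sup>2"
  proof
    assume "2 * (r3 t $ 1)\<^sup>2 \<le> (r3 t $ 2)\<^sup>2"
    then have "1 * s\<^sup>2 \<le> (1 + t)\<^sup>2 * s\<^sup>2" unfolding x2 y2 using pos by (simp add: field_simps)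
    then have "1 \<le> (1 + t)\<^sup>2" using s by simp
    moreover have "(1 + t)\<^sup>2 < 1\<^sup>2" using pos t by (intro power_strict_mono) auto
    ultimately show False by simp
  qed
  show ?thesis unfolding open_cap_def using not_x not_y diag by auto
qed

lemma r0_not_open_cap:
  assumes "0 \<le> t" "t < 1/4"
  shows "\<not> open_cap (r0 t $ 1) (r0 t $ 2) (r0 t $ 3)"
  unfolding r0_def
  using assms r1_not_open_cap[of "6 * t - 1/2"] r2_not_open_cap[of "6 * t - 1"]
    r3_not_open_cap[of "6 * t - 3/2"]
  by (auto simp: open_cap_rotz_pow)

lemma Rcurve_not_open_cap: "\<not> open_cap (Rcurve t $ 1) (Rcurve t $ 2) (Rcurve t $ 3)"
proof -
  define s where "s = t - of_int \<lfloor>t\<rfloor>"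
  define k where "k = nat \<lfloor>4 * s\<rfloor>"
  have "0 \<le> s" "s < 1" unfolding s_def by linarith+
  then have "real k = of_int \<lfloor>4 * s\<rfloor>" unfolding k_def by simp
  then have "0 \<le> s - real k / 4" "s - real k / 4 < 1/4" by linarith+
  then show ?thesis
    using r0_not_open_cap unfolding Rcurve_def Let_def s_def[symmetric] k_def[symmetric]
    by (simp add: open_cap_rotz_pow)
qed

lemma convex_comb_less_sqrt:
  fixes \<mu> z :: real
  assumes "0 < \<mu>" "\<mu> < 1" "z < 1"
  shows "1 - \<mu> + \<mu> * z < sqrt (1 - \<mu> + \<mu> * z\<^sup>2)"
proof (rule real_less_rsqrt)
  have "1 - \<mu> + \<mu> * z\<^sup>2 - (1 - \<mu> + \<mu> * z)\<^sup>2 = \<mu> * (1 - \<mu>) * (1 - z)\<^sup>2"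
    by (simp add: algebra_simps power2_eq_square)
  moreover have "\<mu> * (1 - \<mu>) * (1 - z)\<^sup>2 > 0" using assms by simp
  ultimately show "(1 - \<mu> + \<mu> * z)\<^sup>2 < 1 - \<mu> + \<mu> * z\<^sup>2" by linarith
qed

lemma open_cap_shrink:
  fixes x y z l :: real
  assumes n: "x\<^sup>2 + y\<^sup>2 + z\<^sup>2 = 1" and z: "z > 0" and P: "polar_zone x y z"
    and l: "0 \<le> l" "l < 1"
  shows "open_cap (l * x) (l * y) (sqrt (1 - l\<^sup>2 * (x\<^sup>2 + y\<^sup>2)))"
proof -
  define \<rho> \<mu> where "\<rho> = x\<^sup>2 + y\<^sup>2" and "\<mu> = l\<^sup>2"
  have "z\<^sup>2 > 0" using z by simp
  then have \<rho>: "\<rho> = 1 - z\<^sup>2" "0 \<le> \<rho>" "\<rho> < 1"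
    unfolding \<rho>_def using n zero_le_power2[of x] zero_le_power2[of y] by linarith+
  have \<mu>: "0 \<le> \<mu>" "\<mu> < 1" unfolding \<mu>_def using l by (simp_all add: abs_square_less_1)
  have "\<mu> * \<rho> \<le> 1 * \<rho>" using \<mu> \<rho> by (intro mult_right_mono) auto
  then have "1 - \<mu> * \<rho> > 0" using \<rho> by linarith
  then have zp: "sqrt (1 - \<mu> * \<rho>) > 0" by simp
  have sq: "(l * x)\<^sup>2 = \<mu> * x\<^sup>2" "(l * y)\<^sup>2 = \<mu> * y\<^sup>2" "\<bar>l * x * (l * y)\<bar> = \<mu> * \<bar>x * y\<bar>"
    unfolding \<mu>_def by (simp_all add: power_mult_distrib abs_mult power2_eq_square)
  have scale: "A \<le> B \<Longrightarrow> \<mu> * A \<le> \<mu> * B" for A B using \<mu> by (simp add: mult_left_mono)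
  from P[unfolded polar_zone_def] consider
    (axial) "2 * y\<^sup>2 \<le> x\<^sup>2 \<or> 2 * x\<^sup>2 \<le> y\<^sup>2" "x\<^sup>2 \<le> 1/2" "y\<^sup>2 \<le> 1/2"
    | (diagonal) "x\<^sup>2 \<le> 2 * y\<^sup>2" "y\<^sup>2 \<le> 2 * x\<^sup>2" "1 \<le> sqrt 2 * \<bar>x * y\<bar> + z"
    using z by auto
  then show ?thesis
  proof cases
    case axial
    have "2 * (\<mu> * y\<^sup>2) \<le> \<mu> * x\<^sup>2 \<or> 2 * (\<mu> * x\<^sup>2) \<le> \<mu> * y\<^sup>2"
      using axial(1) scale[of "2 * y\<^sup>2" "x\<^sup>2"] scale[of "2 * x\<^sup>2" "y\<^sup>2"]
      by (auto simp: mult.left_commute)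
    moreover have "\<mu> * x\<^sup>2 \<le> \<mu> * (1/2)" "\<mu> * y\<^sup>2 \<le> \<mu> * (1/2)"
      using axial(2,3) scale by blast+
    moreover have "\<mu> * (1/2) < 1/2" using \<mu> by simp
    ultimately show ?thesis unfolding open_cap_def sq \<mu>_def[symmetric] \<rho>_def[symmetric] using zp by auto
  next
    case diagonal
    then have diag: "\<mu> * x\<^sup>2 \<le> 2 * (\<mu> * y\<^sup>2)" "\<mu> * y\<^sup>2 \<le> 2 * (\<mu> * x\<^sup>2)"
      using scale by (auto simp: mult.left_commute)
    show ?thesis
    proof (cases "\<mu> = 0 \<or> \<rho> = 0")
      case True
      then have lx: "l * x = 0" and ly: "l * y = 0"
        unfolding \<mu>_def \<rho>_def by (auto simp: sum_power2_eq_zero_iff)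
      show ?thesis using zp unfolding open_cap_def lx ly \<mu>_def \<rho>_def by simp
    next
      case False
      then have "0 < \<mu>" "0 < \<rho>" using \<mu> \<rho> by auto
      then have "z < 1" using \<rho>(1) z by (simp add: power_less_one_iff)
      have "1 - \<mu> + \<mu> * z < sqrt (1 - \<mu> * \<rho>)"
        using convex_comb_less_sqrt[OF \<open>0 < \<mu>\<close> \<mu>(2) \<open>z < 1\<close>] unfolding \<rho>(1)
        by (simp add: algebra_simps)
      moreover have "\<mu> * (sqrt 2 * \<bar>x * y\<bar> + z - 1) \<ge> 0" using \<mu> diagonal by simp
      ultimately have "1 < sqrt 2 * (\<mu> * \<bar>x * y\<bar>) + sqrt (1 - \<mu> * \<rho>)"
        by (simp add: algebra_simps)
      then show ?thesis
        unfolding open_cap_def sq \<mu>_def[symmetric] \<rho>_def[symmetric] using zp diag by auto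
    qed
  qed
qed

lemma Gamma_not_open_cap: "p \<in> Gamma \<Longrightarrow> \<not> open_cap (p$1) (p$2) (p$3)"
  unfolding Gamma_def using Rcurve_not_open_cap by auto

lemma polar_zone_upper_in_Aregion:
  assumes p: "norm p = 1" and z: "p$3 > 0" and P: "polar_zone (p$1) (p$2) (p$3)"
  shows "p \<in> Aregion"
proof (cases "p \<in> Gamma")
  case True
  then show ?thesis unfolding Aregion_def by simp
next
  case False
  have n: "(p$1)\<^sup>2 + (p$2)\<^sup>2 + (p$3)\<^sup>2 = 1" using p by (simp add: norm_eq_1_vec3)
  define \<rho> where "\<rho> = (p$1)\<^sup>2 + (p$2)\<^sup>2"
  define g where "g l = l *\<^sub>R vector [p$1, p$2, 0] + sqrt (1 - l\<^sup>2 * \<rho>) *\<^sub>R north" for l :: real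
  have g: "g l $ 1 = l * p$1" "g l $ 2 = l * p$2" "g l $ 3 = sqrt (1 - l\<^sup>2 * \<rho>)" for l
    by (simp_all add: g_def north_def)
  have "0 \<le> \<rho>" unfolding \<rho>_def by simp
  have "\<rho> \<le> 1" unfolding \<rho>_def using n zero_le_power2[of "p$3"] by linarith
  have "(p$3)\<^sup>2 = 1 - \<rho>" unfolding \<rho>_def using n by simp
  then have "sqrt (1 - \<rho>) = p$3" using z by (intro real_sqrt_unique) auto
  then have g1: "g 1 = p" by (simp add: vec_eq_iff forall_3 g)
  have g0: "g 0 = north" by (simp add: vec_eq_iff forall_3 g north_def)
  have "g ` {0..1} \<subseteq> sphere 0 1 - Gamma"
  proof
    fix q assume "q \<in> g ` {0..1}"
    then obtain l where l: "0 \<le> l" "l \<le> 1" and q: "q = g l" by auto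
    have "l\<^sup>2 * \<rho> \<le> 1 * 1" using l \<open>0 \<le> \<rho>\<close> \<open>\<rho> \<le> 1\<close> by (intro mult_mono) (auto simp: power_le_one)
    then have "norm q = 1"
      unfolding q norm_eq_1_vec3 g \<rho>_def by (simp add: power_mult_distrib algebra_simps)
    moreover have "q \<notin> Gamma"
    proof (cases "l = 1")
      case True
      then show ?thesis using q g1 False by simp
    next
      case False
      then have "open_cap (q$1) (q$2) (q$3)"
        using open_cap_shrink[OF n z P l(1)] l(2) unfolding q g \<rho>_def by simp
      then show ?thesis using Gamma_not_open_cap by blast
    qed
    ultimately show "q \<in> sphere 0 1 - Gamma" by simp
  qed
  moreover have "connected (g ` {0..1})"
    unfolding g_def by (intro connected_continuous_image continuous_intros) simp
  moreover have "north \<in> g ` {0..1}" unfolding g0[symmetric] by (rule imageI) simp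
  ultimately have "g ` {0..1} \<subseteq> connected_component_set (sphere 0 1 - Gamma) north"
    by (intro connected_component_maximal)
  moreover have "p \<in> g ` {0..1}" unfolding g1[symmetric] by (rule imageI) simp
  ultimately show ?thesis unfolding Aregion_def by blast
qed

lemma polar_zone_z_nonzero:
  assumes n: "x\<^sup>2 + y\<^sup>2 + z\<^sup>2 = 1" and P: "polar_zone x y z"
  shows "z \<noteq> 0"
proof
  assume "z = 0"
  then have n: "x\<^sup>2 + y\<^sup>2 = 1" using n by simp
  have "(x\<^sup>2 + y\<^sup>2)\<^sup>2 - 4 * (x * y)\<^sup>2 = (x\<^sup>2 - y\<^sup>2)\<^sup>2" by algebra
  then have "(x\<^sup>2 + y\<^sup>2)\<^sup>2 - 4 * (x * y)\<^sup>2 \<ge> 0" by simp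
  then have "4 * (x * y)\<^sup>2 \<le> 1" using n by simp
  then have "(sqrt 2 * \<bar>x * y\<bar>)\<^sup>2 < 1\<^sup>2" by (simp add: power_mult_distrib)
  then have "sqrt 2 * \<bar>x * y\<bar> < 1" by (rule power2_less_imp_less) simp
  then show False using P n \<open>z = 0\<close> unfolding polar_zone_def by auto
qed

lemma N0_not_polar_zone:
  assumes "p \<in> N0"
  shows "\<not> polar_zone (p$1) (p$2) (p$3)"
proof
  assume P: "polar_zone (p$1) (p$2) (p$3)"
  have p: "norm p = 1" "p \<notin> Aregion" "- p \<notin> Aregion"
    using assms unfolding N0_def by (auto simp: image_iff)
  then have "p$3 \<noteq> 0"
    using polar_zone_z_nonzero P by (simp add: norm_eq_1_vec3)
  then consider "p$3 > 0" | "(-p)$3 > 0" by fastforce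
  then show False
  proof cases
    case 1
    then show False using polar_zone_upper_in_Aregion[OF p(1) _ P] p(2) by blast
  next
    case 2
    moreover have "polar_zone ((-p)$1) ((-p)$2) ((-p)$3)" using P polar_zone_uminus by simp
    ultimately show False using polar_zone_upper_in_Aregion[of "-p"] p by simp
  qed
qed

theorem proposition3p5:
  shows "\<not> (\<exists>u v w. u \<in> N0 \<and> v \<in> N0 \<and> w \<in> N0 \<and>
              inner u v = 0 \<and> inner v w = 0 \<and> inner u w = 0)"
proof
  assume "\<exists>u v w. u \<in> N0 \<and> v \<in> N0 \<and> w \<in> N0 \<and> inner u v = 0 \<and> inner v w = 0 \<and> inner u w = 0"
  then obtain u v w where mem: "u \<in> N0" "v \<in> N0" "w \<in> N0"
    and orth: "inner u v = 0" "inner v w = 0" "inner u w = 0"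
    by blast
  have "norm u = 1" "norm v = 1" "norm w = 1" using mem unfolding N0_def by simp_all
  then have "orthonormal_frame u v w" using orth unfolding orthonormal_frame_def by simp
  from orthonormal_frame_meets_polar_zone[OF this] show False
    using N0_not_polar_zone[OF mem(1)] N0_not_polar_zone[OF mem(2)] N0_not_polar_zone[OF mem(3)]
    by blast
qed

end
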